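(* Let $(v,b)$ satisfy (C1), with associated pair $(\lambda,\varepsilon)$ (so $\varepsilon\in\{\pm1,\pm2\}$). Then every TS$(v;b)$ $(V,\mathcal F)$ satisfies $$\sum_{\{x,y\}\in\binom V2}\lambda_{x,y}^2\ \ge\ \binom v2\lambda^2+2\varepsilon\lambda+2+|\varepsilon|,$$ and equality holds for any TS$(v;b)$ satisfying one of: (i) all $\lambda_{x,y}\in\{\lambda-1,\lambda,\lambda+1\}$, and with $D_1=\{\{x,y\}:\lambda_{x,y}=\lambda+1\}$, $D_{-1}=\{\{x,y\}:\lambda_{x,y}=\lambda-1\}$ we have $(|D_1|,|D_{-1}|)=(1+\varepsilon,1)$ if $\varepsilon\in\{1,2\}$ and $(|D_1|,|D_{-1}|)=(1,1-\varepsilon)$ if $\varepsilon\in\{-1,-2\}$; or (ii) $\varepsilon\in\{\pm2\}$ and $\lambda_{x,y}=\lambda$ for all pairs except exactly one pair, for which $\lambda_{x,y}=\lambda+\varepsilon$.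
   Context: A triple system TS$(v;b)$ is a pair $(V,\mathcal F)$ where $V$ is a set of $v\ge 3$ points and $\mathcal F$ is a multiset of $b$ 3-subsets of $V$ (blocks); repeated blocks allowed. $\lambda_{x,y}$ is the number of blocks (with multiplicity) containing $\{x,y\}$. The associated pair $(\lambda,\varepsilon)$ of $(v,b)$: integers with $3b=\lambda\binom v2+\varepsilon$, $-v/2<\varepsilon<v/2$. (C1): $v\equiv 2\pmod 3$ and $b\in\{\lfloor \lambda v(v-1)/6\rfloor,\lceil \lambda v(v-1)/6\rceil\}$ for an integer $\lambda$ with $\lambda\equiv1,2\pmod 3$ if $v\equiv5\pmod6$ and $\lambda\equiv 2,4\pmod 6$ if $v\equiv2\pmod 6$; this $\lambda$ is the $\lambda$ of the associated pair. *)

theory Defs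
  imports Complex_Main "HOL-Library.Multiset"
begin

text \<open>A triple system TS(v;b): a finite point set V with at least 3 points and a
multiset F of 3-subsets of V (repeated blocks allowed). v = card V, b = size F.\<close>
definition TS :: "'a set \<Rightarrow> 'a set multiset \<Rightarrow> bool" where
  "TS V F \<longleftrightarrow> finite V \<and> card V \<ge> 3 \<and> (\<forall>B \<in># F. B \<subseteq> V \<and> card B = 3)"

definition pairs :: "'a set \<Rightarrow> 'a set set" where
  "pairs V = {P. P \<subseteq> V \<and> card P = 2}"

definition lam :: "'a set multiset \<Rightarrow> 'a set \<Rightarrow> int" where
  "lam F P = int (size (filter_mset (\<lambda>B. P \<subseteq> B) F))"

definition assoc_pair :: "nat \<Rightarrow> nat \<Rightarrow> int \<Rightarrow> int \<Rightarrow> bool" where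
  "assoc_pair v b l e \<longleftrightarrow> 3 * int b = l * int (v choose 2) + e \<and> - int v < 2 * e \<and> 2 * e < int v"

definition C1 :: "nat \<Rightarrow> nat \<Rightarrow> int \<Rightarrow> bool" where
  "C1 v b l \<longleftrightarrow> v mod 3 = 2 \<and>
     (int b = \<lfloor>real_of_int (l * int v * (int v - 1)) / 6\<rfloor> \<or>
      int b = \<lceil>real_of_int (l * int v * (int v - 1)) / 6\<rceil>) \<and>
     (v mod 6 = 5 \<longrightarrow> l mod 3 \<in> {1, 2}) \<and>
     (v mod 6 = 2 \<longrightarrow> l mod 6 \<in> {2, 4})"

end

theory Submission
  imports Defs
begin

(*
  Write d P = lam F P - l. Counting incidences gives sum d = e, hence
  sum lam^2 = (v choose 2) l^2 + 2 e l + sum d^2. A block through a point x contains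
  exactly two pairs through x, and (v - 1) l is even under (C1), so the deviations on the
  pairs through x have even sum; (C1) also forces e in {+-1, +-2}. Now sum d^2 - |e| is even and nonnegative,
  and it vanishes only if d takes the values 0 and sgn e alone. Then the pairs with
  d P ~= 0 form a graph with |e| <= 2 edges in which every degree is even, which is
  impossible.
*)

lemma sum_if_const_eq_card:
  fixes c :: int
  assumes "finite A"
  shows "(\<Sum>x\<in>A. if P x then c else 0) = c * int (card {x\<in>A. P x})"
  using assms by (simp add: sum.If_cases Int_def conj_commute)

lemma lam_empty [simp]: "lam {#} P = 0"
  by (simp add: lam_def)

lemma lam_add_mset [simp]: "lam (add_mset B F) P = lam F P + (if P \<subseteq> B then 1 else 0)"
  by (simp add: lam_def)

lemma finite_pairs: "finite V \<Longrightarrow> finite (pairs V)"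
  unfolding pairs_def by (rule finite_subset[of _ "Pow V"]) auto

lemma card_pairs: "finite V \<Longrightarrow> card (pairs V) = card V choose 2"
  unfolding pairs_def by (rule n_subsets)

lemma doubleton_in_pairs: "\<lbrakk>x \<in> V; z \<in> V - {x}\<rbrakk> \<Longrightarrow> {x, z} \<in> pairs V"
  unfolding pairs_def by auto

lemma sum_lam_pairs:
  assumes "finite V" "\<forall>B\<in>#F. B \<subseteq> V \<and> card B = 3"
  shows "(\<Sum>P\<in>pairs V. lam F P) = 3 * int (size F)"
  using assms(2)
proof (induction F)
  case (add B F)
  have "finite B" using add.prems assms(1) finite_subset by auto
  have "{P\<in>pairs V. P \<subseteq> B} = {P. P \<subseteq> B \<and> card P = 2}"
    using add.prems unfolding pairs_def by auto
  then have "card {P\<in>pairs V. P \<subseteq> B} = 3"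
    using n_subsets[OF \<open>finite B\<close>, of 2] add.prems by (simp add: choose_two)
  then show ?case
    using add sum_if_const_eq_card[OF finite_pairs[OF assms(1)], of "\<lambda>P. P \<subseteq> B" 1]
    by (simp add: sum.distrib)
qed simp

lemma sum_lam_vertex:
  assumes "finite V" "x \<in> V" "\<forall>B\<in>#F. B \<subseteq> V \<and> card B = 3"
  shows "(\<Sum>z\<in>V-{x}. lam F {x, z}) = 2 * int (size (filter_mset (\<lambda>B. x \<in> B) F))"
  using assms(3)
proof (induction F)
  case (add B F)
  have "{z\<in>V-{x}. {x, z} \<subseteq> B} = (if x \<in> B then B - {x} else {})"
    using add.prems by auto
  moreover have "x \<in> B \<Longrightarrow> card (B - {x}) = 2"
    using add.prems by (simp add: card_Diff_singleton)
  ultimately have "int (card {z\<in>V-{x}. {x, z} \<subseteq> B}) = (if x \<in> B then 2 else 0)"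
    by simp
  then show ?case
    using add sum_if_const_eq_card[of "V - {x}" "\<lambda>z. {x, z} \<subseteq> B" 1] assms(1)
    by (simp add: sum.distrib)
qed simp

lemma mult_minus_sgn_nonneg: "0 \<le> (d::int) * (d - sgn t)"
proof -
  consider "d \<ge> 1" | "d = 0" | "d \<le> -1" by linarith
  then show ?thesis
    by cases (auto simp: sgn_if intro: mult_nonneg_nonneg mult_nonpos_nonpos)
qed

lemma sum_square_minus_abs_sum:
  fixes d :: "'b \<Rightarrow> int"
  shows "(\<Sum>x\<in>A. (d x)\<^sup>2) - \<bar>\<Sum>x\<in>A. d x\<bar> = (\<Sum>x\<in>A. d x * (d x - sgn (\<Sum>x\<in>A. d x)))"
proof -
  have "\<bar>\<Sum>x\<in>A. d x\<bar> = (\<Sum>x\<in>A. d x * sgn (\<Sum>x\<in>A. d x))"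
    by (simp add: abs_sgn sum_distrib_right mult.commute)
  then show ?thesis
    by (simp add: right_diff_distrib sum_subtractf power2_eq_square)
qed

lemma abs_sum_le_sum_square:
  fixes d :: "'b \<Rightarrow> int"
  shows "\<bar>\<Sum>x\<in>A. d x\<bar> \<le> (\<Sum>x\<in>A. (d x)\<^sup>2)"
  using sum_square_minus_abs_sum[of d A]
    sum_nonneg[of A "\<lambda>x. d x * (d x - sgn (\<Sum>x\<in>A. d x))", OF mult_minus_sgn_nonneg]
  by linarith

lemma sum_square_eq_abs_sumD:
  fixes d :: "'b \<Rightarrow> int"
  assumes "finite A" "(\<Sum>x\<in>A. (d x)\<^sup>2) = \<bar>\<Sum>x\<in>A. d x\<bar>" "x \<in> A"
  shows "d x \<in> {0, sgn (\<Sum>x\<in>A. d x)}"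
proof -
  have "(\<Sum>x\<in>A. d x * (d x - sgn (\<Sum>x\<in>A. d x))) = 0"
    using sum_square_minus_abs_sum[of d A] assms(2) by simp
  then have "d x * (d x - sgn (\<Sum>x\<in>A. d x)) = 0"
    using sum_nonneg_eq_0_iff[OF assms(1), of "\<lambda>x. d x * (d x - sgn (\<Sum>x\<in>A. d x))"]
      mult_minus_sgn_nonneg assms(3)
    by simp
  then show ?thesis by simp
qed

lemma even_sum_square_minus_sum:
  fixes d :: "'b \<Rightarrow> int"
  shows "even ((\<Sum>x\<in>A. (d x)\<^sup>2) - (\<Sum>x\<in>A. d x))"
proof -
  have "even ((d x)\<^sup>2 - d x)" for x
    by (cases "even (d x)") (auto simp: power2_eq_square)
  then show ?thesis by (simp add: dvd_sum flip: sum_subtractf)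
qed

lemma card_ge_3_if_even_degrees:
  assumes "finite V" "S \<subseteq> pairs V" "S \<noteq> {}"
    and even_deg: "\<forall>x\<in>V. even (card {z\<in>V-{x}. {x, z} \<in> S})"
  shows "3 \<le> card S"
proof -
  have other_edge: "\<exists>z\<in>V-{x}. z \<noteq> y \<and> {x, z} \<in> S"
    if "x \<in> V" "y \<in> V-{x}" "{x, y} \<in> S" for x y
  proof (rule ccontr)
    assume "\<not> ?thesis"
    then have "{z\<in>V-{x}. {x, z} \<in> S} = {y}" using that by auto
    moreover have "even (card {z\<in>V-{x}. {x, z} \<in> S})" using even_deg that(1) by blast
    ultimately show False by simp
  qed
  obtain P where "P \<in> S" using assms(3) by blast
  then obtain x y where xy: "{x, y} \<in> S" "x \<in> V" "y \<in> V-{x}"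
    using assms(2) unfolding pairs_def by (auto simp: card_2_iff)
  obtain z where z: "z \<in> V-{x}" "z \<noteq> y" "{x, z} \<in> S"
    using other_edge[OF xy(2,3,1)] by blast
  obtain w where w: "w \<in> V-{y}" "w \<noteq> x" "{y, w} \<in> S"
    using other_edge[of y x] xy by (auto simp: insert_commute)
  have "card {{x, y}, {x, z}, {y, w}} = 3"
    using xy z w by (auto simp: doubleton_eq_iff)
  moreover have "card {{x, y}, {x, z}, {y, w}} \<le> card S"
    using xy z w finite_subset[OF assms(2) finite_pairs[OF assms(1)]] by (intro card_mono) auto
  ultimately show ?thesis by simp
qed

lemma sum_square_ge_abs_sum_plus_two:
  fixes d :: "'a set \<Rightarrow> int"
  assumes "finite V"
    and sum_d: "(\<Sum>P\<in>pairs V. d P) = e" and "e \<noteq> 0" "\<bar>e\<bar> \<le> 2"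
    and even_at_vertex: "\<forall>x\<in>V. even (\<Sum>z\<in>V-{x}. d {x, z})"
  shows "\<bar>e\<bar> + 2 \<le> (\<Sum>P\<in>pairs V. (d P)\<^sup>2)"
proof (rule ccontr)
  assume "\<not> ?thesis"
  moreover have "\<bar>e\<bar> \<le> (\<Sum>P\<in>pairs V. (d P)\<^sup>2)"
    using abs_sum_le_sum_square[of d "pairs V"] sum_d by simp
  moreover have "even ((\<Sum>P\<in>pairs V. (d P)\<^sup>2) - \<bar>e\<bar>)"
    using even_sum_square_minus_sum[of d "pairs V"] sum_d by (cases "e \<ge> 0") auto
  then obtain k where k: "(\<Sum>P\<in>pairs V. (d P)\<^sup>2) - \<bar>e\<bar> = 2 * k" by blast
  ultimately have "0 \<le> k \<and> k < 1" by linarith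
  then have "(\<Sum>P\<in>pairs V. (d P)\<^sup>2) = \<bar>\<Sum>P\<in>pairs V. d P\<bar>"
    using k sum_d by simp
  then have d_cases: "d P \<in> {0, sgn e}" if "P \<in> pairs V" for P
    using sum_square_eq_abs_sumD[OF finite_pairs[OF \<open>finite V\<close>]] that sum_d by blast
  define S where "S = {P\<in>pairs V. d P \<noteq> 0}"
  have d_S: "d P = (if P \<in> S then sgn e else 0)" if "P \<in> pairs V" for P
    using d_cases[OF that] that \<open>e \<noteq> 0\<close> by (auto simp: S_def)
  have "e = (\<Sum>P\<in>pairs V. if P \<in> S then sgn e else 0)"
    using sum_d d_S by (simp cong: sum.cong)
  also have "\<dots> = sgn e * int (card S)"
    using sum_if_const_eq_card[OF finite_pairs[OF \<open>finite V\<close>]] by (simp add: S_def)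
  finally have "e = sgn e * int (card S)" .
  then have "int (card S) = \<bar>e\<bar>"
    using \<open>e \<noteq> 0\<close> by (cases "e > 0") (auto simp: sgn_if)
  then have "S \<noteq> {}" "card S < 3"
    using \<open>e \<noteq> 0\<close> \<open>\<bar>e\<bar> \<le> 2\<close> by auto
  moreover have "\<forall>x\<in>V. even (card {z\<in>V-{x}. {x, z} \<in> S})"
  proof
    fix x assume "x \<in> V"
    have "(\<Sum>z\<in>V-{x}. d {x, z}) = (\<Sum>z\<in>V-{x}. if {x, z} \<in> S then sgn e else 0)"
      using d_S doubleton_in_pairs[OF \<open>x \<in> V\<close>] by (intro sum.cong) auto
    also have "\<dots> = sgn e * int (card {z\<in>V-{x}. {x, z} \<in> S})"
      using \<open>finite V\<close> by (simp add: sum_if_const_eq_card)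
    finally have "even (sgn e * int (card {z\<in>V-{x}. {x, z} \<in> S}))"
      using even_at_vertex \<open>x \<in> V\<close> by metis
    then show "even (card {z\<in>V-{x}. {x, z} \<in> S})"
      using \<open>e \<noteq> 0\<close> by simp
  qed
  moreover have "S \<subseteq> pairs V" by (simp add: S_def)
  ultimately show False
    using card_ge_3_if_even_degrees[OF \<open>finite V\<close>] by (meson not_le)
qed

lemma two_mult_choose_two: "2 * int (n choose 2) = int n * (int n - 1)"
proof -
  have "even (n * (n - 1))" by auto
  then have "2 * (n choose 2) = n * (n - 1)"
    by (simp add: choose_two)
  then have "2 * int (n choose 2) = int n * int (n - 1)"
    by (metis of_nat_mult of_nat_numeral)
  then show ?thesis
    by (cases n) auto
qed

lemma choose_two_mod_3: "n mod 3 = 2 \<Longrightarrow> int (n choose 2) mod 3 = 1"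
proof -
  assume "n mod 3 = 2"
  then obtain k where "n = 3 * k + 2" by (metis mult.commute div_mult_mod_eq)
  then have "2 * int (n choose 2) = 9 * (int k * int k + int k) + 2"
    by (simp add: two_mult_choose_two algebra_simps)
  then show ?thesis by presburger
qed

lemma C1_near_multiple:
  assumes "C1 v b l"
  shows "\<bar>3 * int b - l * int (v choose 2)\<bar> \<le> 2"
proof -
  define m where "m = l * int (v choose 2)"
  have quot: "real_of_int (l * int v * (int v - 1)) / 6 = real_of_int m / 3"
    unfolding m_def using two_mult_choose_two[of v, symmetric]
    by (simp add: mult.assoc flip: of_int_mult)
  then have "int b = \<lfloor>real_of_int m / 3\<rfloor> \<or> int b = \<lceil>real_of_int m / 3\<rceil>"
    using assms unfolding C1_def quot by blast
  then have "real_of_int (3 * int b) \<le> real_of_int m \<and> real_of_int m < real_of_int (3 * int b + 3) \<or>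
             real_of_int (3 * int b - 3) < real_of_int m \<and> real_of_int m \<le> real_of_int (3 * int b)"
  proof
    assume "int b = \<lfloor>real_of_int m / 3\<rfloor>"
    then have "real_of_int (int b) \<le> real_of_int m / 3 \<and> real_of_int m / 3 < real_of_int (int b) + 1"
      by (metis floor_eq_iff)
    then show ?thesis by auto
  next
    assume "int b = \<lceil>real_of_int m / 3\<rceil>"
    then have "real_of_int (int b) - 1 < real_of_int m / 3 \<and> real_of_int m / 3 \<le> real_of_int (int b)"
      by (metis ceiling_eq_iff)
    then show ?thesis by auto
  qed
  then show ?thesis
    unfolding m_def of_int_le_iff of_int_less_iff by linarith
qed

lemma assoc_pair_lambda_eq:
  assumes "assoc_pair v b l e" "\<bar>3 * int b - l' * int (v choose 2)\<bar> \<le> 2" "5 \<le> v"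
  shows "l = l'"
proof -
  define N where "N = int (v choose 2)"
  have "int v * 4 \<le> int v * (int v - 1)"
    using assms(3) by (intro mult_left_mono) auto
  then have N_large: "2 * int v \<le> N"
    using two_mult_choose_two[of v] unfolding N_def by linarith
  have ap: "3 * int b = l * N + e" "- int v < 2 * e" "2 * e < int v"
    using assms(1) unfolding assoc_pair_def N_def by auto
  have "(l - l') * N = (3 * int b - l' * N) - e"
    using ap(1) by (simp add: algebra_simps)
  then have "\<bar>(l - l') * N\<bar> < N"
    using ap(2,3) assms(2,3) N_large unfolding N_def by linarith
  then have "\<bar>l - l'\<bar> * N < 1 * N"
    using N_large by (simp add: abs_mult)
  then show "l = l'"
    using N_large mult_right_mono[of 1 "\<bar>l - l'\<bar>" N] by linarith
qed

lemma C1_assoc_pair: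
  assumes c1: "C1 v b l'" and ap: "assoc_pair v b l e" and "3 \<le> v"
  shows "l = l'" "e \<noteq> 0" "\<bar>e\<bar> \<le> 2" "even ((int v - 1) * l)"
proof -
  have v_mod: "v mod 3 = 2"
    using c1 unfolding C1_def by blast
  then have v_mod_6: "v mod 6 = 2 \<or> v mod 6 = 5"
    by presburger
  have "5 \<le> v" using v_mod \<open>3 \<le> v\<close> by presburger
  show "l = l'"
    using assoc_pair_lambda_eq[OF ap C1_near_multiple[OF c1] \<open>5 \<le> v\<close>] .
  then have "v mod 6 = 5 \<Longrightarrow> l mod 3 = 1 \<or> l mod 3 = 2"
    and "v mod 6 = 2 \<Longrightarrow> l mod 6 = 2 \<or> l mod 6 = 4"
    using c1 unfolding C1_def by auto
  then have l_mod: "l mod 3 \<noteq> 0" "v mod 6 = 2 \<Longrightarrow> even l"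
    using v_mod_6 by presburger+
  have e_eq: "e = 3 * int b - l * int (v choose 2)"
    using ap unfolding assoc_pair_def by simp
  then show "\<bar>e\<bar> \<le> 2"
    using C1_near_multiple[OF c1] \<open>l = l'\<close> by simp
  have "(l * int (v choose 2)) mod 3 = l mod 3"
    using mod_mult_right_eq[of l "int (v choose 2)" 3] choose_two_mod_3[OF v_mod] by simp
  then show "e \<noteq> 0"
    using e_eq l_mod(1) by presburger
  show "even ((int v - 1) * l)"
  proof (cases "v mod 6 = 5")
    case True
    then have "even (int v - 1)" by presburger
    then show ?thesis by simp
  next
    case False
    then show ?thesis using v_mod_6 l_mod(2) by simp
  qed
qed

lemma sum_square_expand_around:
  fixes f :: "'b \<Rightarrow> int"
  shows "(\<Sum>x\<in>A. (f x)\<^sup>2)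
         = int (card A) * c\<^sup>2 + 2 * c * (\<Sum>x\<in>A. f x - c) + (\<Sum>x\<in>A. (f x - c)\<^sup>2)"
proof -
  have "(\<Sum>x\<in>A. (f x)\<^sup>2) = (\<Sum>x\<in>A. c\<^sup>2 + 2 * c * (f x - c) + (f x - c)\<^sup>2)"
    by (rule sum.cong) (simp_all add: power2_eq_square algebra_simps)
  then show ?thesis
    by (simp add: sum.distrib sum_distrib_left)
qed

lemma sum_square_deviation_near:
  fixes f :: "'b \<Rightarrow> int"
  assumes "finite A" "\<forall>x\<in>A. f x \<in> {c - 1, c, c + 1}"
  shows "(\<Sum>x\<in>A. (f x - c)\<^sup>2) = int (card {x\<in>A. f x = c + 1}) + int (card {x\<in>A. f x = c - 1})"
proof -
  have "(\<Sum>x\<in>A. (f x - c)\<^sup>2)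
        = (\<Sum>x\<in>A. (if f x = c + 1 then 1 else 0) + (if f x = c - 1 then 1 else 0))"
    using assms(2) by (intro sum.cong) auto
  then show ?thesis
    using assms(1) by (simp add: sum.distrib sum_if_const_eq_card)
qed

lemma sum_square_deviation_single:
  fixes f :: "'b \<Rightarrow> int"
  assumes "finite A" "x0 \<in> A" "\<forall>x\<in>A. x \<noteq> x0 \<longrightarrow> f x = c"
  shows "(\<Sum>x\<in>A. (f x - c)\<^sup>2) = (f x0 - c)\<^sup>2"
  using sum.remove[OF assms(1,2), of "\<lambda>x. (f x - c)\<^sup>2"] assms(3) by simp

theorem lemma2p1:
  fixes V :: "'a set" and F :: "'a set multiset" and l' l e :: int
  assumes c1: "C1 (card V) (size F) l'"
    and ap: "assoc_pair (card V) (size F) l e"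
    and ts: "TS V F"
  shows "(\<Sum>P\<in>pairs V. (lam F P)\<^sup>2)
           \<ge> int (card V choose 2) * l\<^sup>2 + 2 * e * l + 2 + \<bar>e\<bar> \<and>
        (((\<forall>P\<in>pairs V. lam F P \<in> {l - 1, l, l + 1}) \<and>
          (e \<in> {1, 2} \<longrightarrow>
             card {P\<in>pairs V. lam F P = l + 1} = nat (1 + e) \<and>
             card {P\<in>pairs V. lam F P = l - 1} = 1) \<and>
          (e \<in> {-1, -2} \<longrightarrow>
             card {P\<in>pairs V. lam F P = l + 1} = 1 \<and>
             card {P\<in>pairs V. lam F P = l - 1} = nat (1 - e)))
         \<or> (e \<in> {2, -2} \<and>
            (\<exists>P0\<in>pairs V. lam F P0 = l + e \<and>
               (\<forall>P\<in>pairs V. P \<noteq> P0 \<longrightarrow> lam F P = l)))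
         \<longrightarrow> (\<Sum>P\<in>pairs V. (lam F P)\<^sup>2)
               = int (card V choose 2) * l\<^sup>2 + 2 * e * l + 2 + \<bar>e\<bar>)"
proof -
  have "finite V" "3 \<le> card V" and blocks: "\<forall>B\<in>#F. B \<subseteq> V \<and> card B = 3"
    using ts unfolding TS_def by auto
  note lambda = C1_assoc_pair[OF c1 ap \<open>3 \<le> card V\<close>]
  define d where "d P = lam F P - l" for P
  have sum_d: "(\<Sum>P\<in>pairs V. d P) = e"
    using sum_lam_pairs[OF \<open>finite V\<close> blocks] ap card_pairs[OF \<open>finite V\<close>]
    by (simp add: d_def sum_subtractf assoc_pair_def)
  have "\<forall>x\<in>V. even (\<Sum>z\<in>V-{x}. d {x, z})"
  proof
    fix x assume "x \<in> V"
    then have "(\<Sum>z\<in>V-{x}. d {x, z})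
               = 2 * int (size (filter_mset (\<lambda>B. x \<in> B) F)) - (int (card V) - 1) * l"
      using sum_lam_vertex[OF \<open>finite V\<close> _ blocks] \<open>finite V\<close> \<open>3 \<le> card V\<close>
      by (simp add: d_def sum_subtractf of_nat_diff)
    then show "even (\<Sum>z\<in>V-{x}. d {x, z})"
      using lambda(4) by simp
  qed
  then have "\<bar>e\<bar> + 2 \<le> (\<Sum>P\<in>pairs V. (d P)\<^sup>2)"
    using sum_square_ge_abs_sum_plus_two[OF \<open>finite V\<close> sum_d lambda(2,3)] by blast
  moreover have "(\<Sum>P\<in>pairs V. (lam F P)\<^sup>2)
                 = int (card V choose 2) * l\<^sup>2 + 2 * e * l + (\<Sum>P\<in>pairs V. (d P)\<^sup>2)"
    using sum_square_expand_around[of "lam F" "pairs V" l] sum_d card_pairs[OF \<open>finite V\<close>]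
    by (simp add: d_def mult.commute)
  ultimately show ?thesis
    using lambda(2,3) finite_pairs[OF \<open>finite V\<close>] sum_square_deviation_near[of "pairs V" "lam F" l]
      sum_square_deviation_single[of "pairs V" _ "lam F" l]
    unfolding d_def by (intro conjI impI; (elim disjE conjE bexE)?; auto)
qed

end
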